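(* Let $G$ be a finite group of order $mn$ and let $H$ be a (not necessarily normal) subgroup of $G$ of order $n$. Suppose $T=\{D_1,\dots,D_s\}$ is a family of pairwise disjoint $k$-subsets of $G$ such that (i) each $D_i$ is an $(m,n,k,\lambda)$-relative difference set in $G$ relative to $H$, and (ii) $T$ partitions $G\setminus H$. Then $T$ is an $(mn,s,k,s\lambda,0)$-DPDF and an $(mn,s,k,mn-2n-s\lambda,mn-n)$-EPDF in $G$.
   Context: Groups are written multiplicatively with identity $e$; $G^*=G\setminus\{e\}$. For $D\subseteq G$, $\Delta(D)$ is the multiset $\{xy^{-1}: x,y\in D, x\ne y\}$; for $D_1,D_2\subseteq G$, $\Delta(D_1,D_2)$ is the multiset $\{xy^{-1}:x\in D_1,y\in D_2\}$. If $|G|=mn$ and $H$ is a subgroup of order $n$ (here not required to be normal), a $k$-subset $R$ is an $(m,n,k,\lambda)$-relative difference set relative to $H$ if $\Delta(R)$ contains each element of $G\setminus H$ exactly $\lambda$ times and no element of $H\setminus\{e\}$. For a family $A=\{A_1,\dots,A_s\}$ of pairwise disjoint subsets, ${\rm Int}(A)=\bigcup_i\Delta(A_i)$ and ${\rm Ext}(A)=\bigcup_{i\ne j}\Delta(A_i,A_j)$ (multiset unions). For $|G|=v$, a $(v,s,k,\lambda,\mu)$-DPDF is a family of $s$ pairwise disjoint $k$-subsets of $G^*$ with union $S$ such that ${\rm Int}(A)$ contains each element of $S$ exactly $\lambda$ times and each element of $G\setminus(S\cup\{e\})$ exactly $\mu$ times; a $(v,s,k,\lambda,\mu)$-EPDF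 is defined the same way using ${\rm Ext}(A)$. A family partitions a set $X$ if its members are pairwise disjoint with union $X$. *)

theory Defs
  imports "HOL-Algebra.Coset" "HOL-Library.Multiset"
begin

definition diff_mset :: "('a, 'b) monoid_scheme \<Rightarrow> 'a set \<Rightarrow> 'a set \<Rightarrow> 'a multiset" where
  "diff_mset G A B = image_mset (\<lambda>(x, y). x \<otimes>\<^bsub>G\<^esub> inv\<^bsub>G\<^esub> y) (mset_set (A \<times> B))"

definition Delta :: "('a, 'b) monoid_scheme \<Rightarrow> 'a set \<Rightarrow> 'a multiset" where
  "Delta G D = image_mset (\<lambda>(x, y). x \<otimes>\<^bsub>G\<^esub> inv\<^bsub>G\<^esub> y)
                 (mset_set {(x, y). x \<in> D \<and> y \<in> D \<and> x \<noteq> y})"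

definition rel_diff_set ::
  "('a, 'b) monoid_scheme \<Rightarrow> 'a set \<Rightarrow> nat \<Rightarrow> nat \<Rightarrow> nat \<Rightarrow> nat \<Rightarrow> 'a set \<Rightarrow> bool" where
  "rel_diff_set G H m n k lam R \<longleftrightarrow>
     finite (carrier G) \<and> order G = m * n \<and> subgroup H G \<and> card H = n \<and>
     R \<subseteq> carrier G \<and> card R = k \<and>
     (\<forall>g \<in> carrier G - H. count (Delta G R) g = lam) \<and>
     (\<forall>g \<in> H - {\<one>\<^bsub>G\<^esub>}. count (Delta G R) g = 0)"

text \<open>Families are indexed: A 0, ..., A (s-1).\<close>
definition Int_mset :: "('a, 'b) monoid_scheme \<Rightarrow> (nat \<Rightarrow> 'a set) \<Rightarrow> nat \<Rightarrow> 'a multiset" where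
  "Int_mset G A s = (\<Sum>i<s. Delta G (A i))"

definition Ext_mset :: "('a, 'b) monoid_scheme \<Rightarrow> (nat \<Rightarrow> 'a set) \<Rightarrow> nat \<Rightarrow> 'a multiset" where
  "Ext_mset G A s = (\<Sum>i<s. \<Sum>j<s. if i \<noteq> j then diff_mset G (A i) (A j) else {#})"

definition pdf_with ::
  "('a, 'b) monoid_scheme \<Rightarrow> 'a multiset \<Rightarrow> nat \<Rightarrow> nat \<Rightarrow> nat \<Rightarrow> int \<Rightarrow> int \<Rightarrow> (nat \<Rightarrow> 'a set) \<Rightarrow> bool" where
  "pdf_with G M v s k lam mu A \<longleftrightarrow>
     finite (carrier G) \<and> order G = v \<and>
     (\<forall>i<s. A i \<subseteq> carrier G - {\<one>\<^bsub>G\<^esub>} \<and> card (A i) = k) \<and>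
     (\<forall>i<s. \<forall>j<s. i \<noteq> j \<longrightarrow> A i \<inter> A j = {}) \<and>
     (\<forall>x \<in> (\<Union>i<s. A i). int (count M x) = lam) \<and>
     (\<forall>x \<in> carrier G - ((\<Union>i<s. A i) \<union> {\<one>\<^bsub>G\<^esub>}). int (count M x) = mu)"

definition DPDF ::
  "('a, 'b) monoid_scheme \<Rightarrow> nat \<Rightarrow> nat \<Rightarrow> nat \<Rightarrow> int \<Rightarrow> int \<Rightarrow> (nat \<Rightarrow> 'a set) \<Rightarrow> bool" where
  "DPDF G v s k lam mu A \<longleftrightarrow> pdf_with G (Int_mset G A s) v s k lam mu A"

definition EPDF ::
  "('a, 'b) monoid_scheme \<Rightarrow> nat \<Rightarrow> nat \<Rightarrow> nat \<Rightarrow> int \<Rightarrow> int \<Rightarrow> (nat \<Rightarrow> 'a set) \<Rightarrow> bool" where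
  "EPDF G v s k lam mu A \<longleftrightarrow> pdf_with G (Ext_mset G A s) v s k lam mu A"

end

theory Submission
  imports Defs "HOL-Algebra.Left_Coset"
begin

(*
  Let S = G - H, the disjoint union of the D_i. The multiset Delta(S,S) of all quotients
  a b^-1 with a, b in S is Ext(T) plus the s multisets Delta(D_i,D_i), and away from the
  identity the latter add up to Int(T). An element x occurs in Delta(S,S) once for each b in S
  with x b in S, i.e. for the b in S outside the left coset x^-1 H. That coset is H itself if
  x is in H and is disjoint from H otherwise, so x occurs mn - n resp. mn - 2n times.
  Since each D_i is a relative difference set, Int(T) takes the value s lambda off H and 0 on
  H - {e}, and Ext(T) = Delta(S,S) - Int(T) gives the remaining values.
*)

lemma image_mset_mset_set_eq_sum:
  "finite A \<Longrightarrow> image_mset f (mset_set A) = (\<Sum>x\<in>A. {#f x#})"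
  by (simp add: sum_unfold_sum_mset)

lemma diff_mset_eq_sum:
  assumes "finite A" "finite B"
  shows "diff_mset G A B = (\<Sum>a\<in>A. \<Sum>b\<in>B. {#a \<otimes>\<^bsub>G\<^esub> inv\<^bsub>G\<^esub> b#})"
  unfolding diff_mset_def using assms
  by (simp add: image_mset_mset_set_eq_sum sum.cartesian_product split_def)

lemma Delta_eq_sum:
  assumes "finite D"
  shows "Delta G D = (\<Sum>a\<in>D. \<Sum>b\<in>D - {a}. {#a \<otimes>\<^bsub>G\<^esub> inv\<^bsub>G\<^esub> b#})"
proof -
  have "{(x, y). x \<in> D \<and> y \<in> D \<and> x \<noteq> y} = Sigma D (\<lambda>a. D - {a})" by auto
  then show ?thesis
    unfolding Delta_def using assms by (simp add: image_mset_mset_set_eq_sum sum.Sigma split_def)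
qed

lemma diff_mset_UN:
  assumes "finite I" "\<forall>i\<in>I. finite (A i)" "\<forall>i\<in>I. \<forall>i'\<in>I. i \<noteq> i' \<longrightarrow> A i \<inter> A i' = {}"
    and "finite J" "\<forall>j\<in>J. finite (B j)" "\<forall>j\<in>J. \<forall>j'\<in>J. j \<noteq> j' \<longrightarrow> B j \<inter> B j' = {}"
  shows "diff_mset G (\<Union>i\<in>I. A i) (\<Union>j\<in>J. B j) = (\<Sum>i\<in>I. \<Sum>j\<in>J. diff_mset G (A i) (B j))"
proof -
  let ?d = "\<lambda>a b. {#a \<otimes>\<^bsub>G\<^esub> inv\<^bsub>G\<^esub> b#}"
  have "diff_mset G (\<Union>i\<in>I. A i) (\<Union>j\<in>J. B j) = (\<Sum>i\<in>I. \<Sum>a\<in>A i. \<Sum>j\<in>J. \<Sum>b\<in>B j. ?d a b)"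
    using assms by (simp add: diff_mset_eq_sum sum.UNION_disjoint)
  also have "\<dots> = (\<Sum>i\<in>I. \<Sum>j\<in>J. \<Sum>a\<in>A i. \<Sum>b\<in>B j. ?d a b)"
    by (simp only: sum.swap[where A = "A _"])
  also have "\<dots> = (\<Sum>i\<in>I. \<Sum>j\<in>J. diff_mset G (A i) (B j))"
    using assms by (simp add: diff_mset_eq_sum)
  finally show ?thesis .
qed

lemma sum_offdiag_add_diag:
  fixes f :: "'i \<Rightarrow> 'i \<Rightarrow> 'a::comm_monoid_add"
  assumes "finite I"
  shows "(\<Sum>i\<in>I. \<Sum>j\<in>I. if i \<noteq> j then f i j else 0) + (\<Sum>i\<in>I. f i i) = (\<Sum>i\<in>I. \<Sum>j\<in>I. f i j)"
proof -
  have "(\<Sum>j\<in>I. if i \<noteq> j then f i j else 0) + f i i = (\<Sum>j\<in>I. f i j)" if "i \<in> I" for i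
  proof -
    have "I \<inter> {j. i \<noteq> j} = I - {i}" by auto
    then show ?thesis using assms that by (simp add: sum.If_cases sum.remove add.commute)
  qed
  then show ?thesis by (simp add: sum.distrib[symmetric])
qed

lemma Ext_mset_add_diag:
  assumes "\<forall>i<s. finite (A i)" "\<forall>i<s. \<forall>j<s. i \<noteq> j \<longrightarrow> A i \<inter> A j = {}"
  shows "Ext_mset G A s + (\<Sum>i<s. diff_mset G (A i) (A i)) = diff_mset G (\<Union>i<s. A i) (\<Union>i<s. A i)"
proof -
  have "Ext_mset G A s + (\<Sum>i<s. diff_mset G (A i) (A i))
      = (\<Sum>i<s. \<Sum>j<s. diff_mset G (A i) (A j))"
    unfolding Ext_mset_def by (rule sum_offdiag_add_diag) simp
  also have "\<dots> = diff_mset G (\<Union>i<s. A i) (\<Union>i<s. A i)"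
    using assms by (intro diff_mset_UN[symmetric]) auto
  finally show ?thesis .
qed

context group
begin

lemma diff_mset_self:
  assumes "A \<subseteq> carrier G" "finite A"
  shows "diff_mset G A A = replicate_mset (card A) \<one> + Delta G A"
proof -
  have "diff_mset G A A = (\<Sum>a\<in>A. {#a \<otimes> inv a#} + (\<Sum>b\<in>A - {a}. {#a \<otimes> inv b#}))"
    unfolding diff_mset_eq_sum[OF assms(2) assms(2)]
    using assms(2) by (intro sum.cong) (simp_all add: sum.remove)
  also have "\<dots> = (\<Sum>a\<in>A. {#\<one>#}) + Delta G A"
    unfolding sum.distrib Delta_eq_sum[OF assms(2)]
    using assms(1) by (simp add: subsetD cong: sum.cong)
  also have "(\<Sum>a\<in>A. {#\<one>#}) = replicate_mset (card A) \<one>"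
    using assms(2) by (simp flip: image_mset_mset_set_eq_sum add: image_mset_const_eq)
  finally show ?thesis .
qed

lemma count_diff_mset:
  assumes "A \<subseteq> carrier G" "B \<subseteq> carrier G" "finite A" "finite B" "x \<in> carrier G"
  shows "count (diff_mset G A B) x = card {b \<in> B. x \<otimes> b \<in> A}"
proof -
  have quotient_eq: "a \<otimes> inv b = x \<longleftrightarrow> a = x \<otimes> b" if "a \<in> A" "b \<in> B" for a b
    using assms that by (metis inv_solve_right subsetD)
  have "count (diff_mset G A B) x = (\<Sum>a\<in>A. \<Sum>b\<in>B. if a \<otimes> inv b = x then 1 else 0)"
    using assms(3,4) by (simp add: diff_mset_eq_sum count_sum cong: if_cong)
  also have "\<dots> = (\<Sum>b\<in>B. \<Sum>a\<in>A. if a = x \<otimes> b then 1 else 0)"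
    using quotient_eq by (subst sum.swap) (simp cong: sum.cong)
  also have "\<dots> = (\<Sum>b\<in>B. if x \<otimes> b \<in> A then 1 else 0)"
    using assms(3) by (simp add: sum.delta')
  also have "\<dots> = card {b \<in> B. x \<otimes> b \<in> A}"
    using assms(4) by (simp add: sum.inter_filter[symmetric])
  finally show ?thesis .
qed

lemma mult_mem_subgroup_iff_mem_l_coset:
  assumes "subgroup H G" "x \<in> carrier G" "b \<in> carrier G"
  shows "x \<otimes> b \<in> H \<longleftrightarrow> b \<in> inv x <# H"
  using subgroup.lcos_module_rev[OF assms(1) is_group, of "inv x" b]
    subgroup.lcos_module_imp[OF assms(1) is_group, of "inv x" b] assms(2,3)
  by auto

lemma card_subgroup_Un_l_coset:
  assumes "subgroup H G" "finite (carrier G)" "x \<in> carrier G"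
  shows "card (H \<union> (x <# H)) = (if x \<in> H then card H else 2 * card H)"
proof (cases "x \<in> H")
  case True
  then have "x <# H \<subseteq> H"
    using subgroup.m_closed[OF assms(1)] unfolding l_coset_def by auto
  then show ?thesis using True by (simp add: Un_absorb2)
next
  case False
  have H_carrier: "H \<subseteq> carrier G" using assms(1) by (rule subgroup.subset)
  have cosets: "H \<in> lcosets H" "x <# H \<in> lcosets H"
    using lcos_mult_one[OF H_carrier, symmetric] assms(3) unfolding LCOSETS_def by auto
  moreover have "x <# H \<noteq> H" using lcos_self[OF assms(3,1)] False by auto
  ultimately have "H \<inter> (x <# H) = {}" by (intro lcos_disjoint[OF assms(1)]) auto
  moreover have "card (x <# H) = card H"
    using l_card_cosets_equal[OF cosets(2) H_carrier assms(2)] by simp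
  moreover have "finite H" "finite (x <# H)"
    using H_carrier l_coset_subset_G[OF H_carrier assms(3)] assms(2) finite_subset by auto
  ultimately show ?thesis using False by (simp add: card_Un_disjoint)
qed

lemma count_diff_mset_subgroup_compl:
  assumes "subgroup H G" "finite (carrier G)" "x \<in> carrier G"
  shows "int (count (diff_mset G (carrier G - H) (carrier G - H)) x)
       = int (order G) - (if x \<in> H then int (card H) else 2 * int (card H))"
proof -
  let ?C = "H \<union> (inv x <# H)"
  have H_carrier: "H \<subseteq> carrier G" using assms(1) by (rule subgroup.subset)
  have C_carrier: "?C \<subseteq> carrier G"
    using H_carrier l_coset_subset_G[OF H_carrier] assms(3) by auto
  have "{b \<in> carrier G - H. x \<otimes> b \<in> carrier G - H} = carrier G - ?C"
    using mult_mem_subgroup_iff_mem_l_coset[OF assms(1,3)] assms(3) C_carrier by auto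
  then have "count (diff_mset G (carrier G - H) (carrier G - H)) x = card (carrier G - ?C)"
    using count_diff_mset[of "carrier G - H" "carrier G - H"] assms(2,3) by simp
  also have "\<dots> = order G - card ?C"
    using C_carrier assms(2) unfolding order_def by (meson card_Diff_subset finite_subset)
  finally have "int (count (diff_mset G (carrier G - H) (carrier G - H)) x)
      = int (order G) - int (card ?C)"
    using C_carrier assms(2) by (simp add: card_mono of_nat_diff order_def)
  moreover have "inv x \<in> H \<longleftrightarrow> x \<in> H"
    using subgroup.m_inv_closed[OF assms(1)] assms(3) by (metis inv_inv)
  ultimately show ?thesis
    using card_subgroup_Un_l_coset[OF assms(1,2), of "inv x"] assms(3) by simp
qed

lemma count_Ext_mset_add_count_Int_mset:
  assumes "\<forall>i<s. A i \<subseteq> carrier G" "\<forall>i<s. finite (A i)"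
    and "\<forall>i<s. \<forall>j<s. i \<noteq> j \<longrightarrow> A i \<inter> A j = {}" "x \<noteq> \<one>"
  shows "count (Ext_mset G A s) x + count (Int_mset G A s) x
       = count (diff_mset G (\<Union>i<s. A i) (\<Union>i<s. A i)) x"
proof -
  have "count (diff_mset G (A i) (A i)) x = count (Delta G (A i)) x" if "i < s" for i
    using assms that by (simp add: diff_mset_self)
  then show ?thesis
    unfolding Ext_mset_add_diag[OF assms(2,3), symmetric] Int_mset_def by (simp add: count_sum)
qed

end

lemma count_Int_mset_rel_diff_sets:
  assumes "\<forall>i<s. rel_diff_set G H m n k lam (D i)" "x \<in> carrier G - {\<one>\<^bsub>G\<^esub>}"
  shows "count (Int_mset G D s) x = (if x \<in> H then 0 else s * lam)"
  using assms unfolding Int_mset_def rel_diff_set_def by (auto simp: count_sum)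

theorem mainTheorem7:
  fixes G :: "('a, 'b) monoid_scheme" and H :: "'a set" and D :: "nat \<Rightarrow> 'a set"
    and m n k s lam :: nat
  assumes "group G"
    and "finite (carrier G)"
    and "order G = m * n"
    and "subgroup H G"
    and "card H = n"
    and "\<forall>i<s. D i \<subseteq> carrier G \<and> card (D i) = k"
    and "\<forall>i<s. \<forall>j<s. i \<noteq> j \<longrightarrow> D i \<inter> D j = {}"
    and "\<forall>i<s. rel_diff_set G H m n k lam (D i)"
    and "(\<Union>i<s. D i) = carrier G - H"
  shows "DPDF G (m * n) s k (int s * int lam) 0 D
       \<and> EPDF G (m * n) s k (int (m * n) - 2 * int n - int s * int lam) (int (m * n) - int n) D"
proof -
  interpret group G by fact
  have one_H: "\<one>\<^bsub>G\<^esub> \<in> H" using assms(4) by (rule subgroup.one_closed)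
  have H_carrier: "H \<subseteq> carrier G" using assms(4) by (rule subgroup.subset)
  have "\<forall>i<s. finite (D i)" using assms(2,6) finite_subset by blast
  then have count_Ext: "int (count (Ext_mset G D s) x)
      = int (count (diff_mset G (carrier G - H) (carrier G - H)) x) - int (count (Int_mset G D s) x)"
    if "x \<in> carrier G - {\<one>\<^bsub>G\<^esub>}" for x
    using count_Ext_mset_add_count_Int_mset[of s D x] assms(6,7,9) that by fastforce
  note count_compl = count_diff_mset_subgroup_compl[OF assms(4,2)]
  have Int_outside: "count (Int_mset G D s) x = s * lam" if "x \<in> carrier G - H" for x
    using count_Int_mset_rel_diff_sets[OF assms(8), of x] that one_H by auto
  have Int_inside: "count (Int_mset G D s) x = 0" if "x \<in> H - {\<one>\<^bsub>G\<^esub>}" for x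
    using count_Int_mset_rel_diff_sets[OF assms(8), of x] that H_carrier by auto
  have Ext_outside: "int (count (Ext_mset G D s) x) = int (m * n) - 2 * int n - int s * int lam"
    if "x \<in> carrier G - H" for x
    using count_Ext[of x] count_compl[of x] Int_outside[of x] that one_H assms(3,5) by auto
  have Ext_inside: "int (count (Ext_mset G D s) x) = int (m * n) - int n"
    if "x \<in> H - {\<one>\<^bsub>G\<^esub>}" for x
    using count_Ext[of x] count_compl[of x] Int_inside[of x] that H_carrier assms(3,5) by auto
  have "\<forall>i<s. D i \<subseteq> carrier G - {\<one>\<^bsub>G\<^esub>} \<and> card (D i) = k"
    using assms(6,9) one_H by blast
  then show ?thesis
    unfolding DPDF_def EPDF_def pdf_with_def
    using assms(2,3,7,9) one_H H_carrier Ext_outside Ext_inside Int_outside Int_inside by auto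
qed

end
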